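(* Fix integers $t\ge1$, $m\ge1$ and $d_1,\dots,d_{t-1}\ge1$. Let $T$ be the rooted tree in which the root (level $t$) has $2m$ children and every vertex at level $s\in\{1,\dots,t-1\}$ has exactly $d_s$ children (level-0 vertices are leaves). Then the number of isomorphism classes of admissible labelings of $T$ (with the root label fixed) having excess $\Delta=0$ equals \[ (2m-1)!!\cdot(2d_{t-1}-1)!!^{\,m}\cdot(2d_{t-2}-1)!!^{\,m d_{t-1}}\cdots(2d_1-1)!!^{\,m d_{t-1}\cdots d_2}. \]
   Context: A labeling gives each vertex $v$ a label $\ell(v)\in[N]$ with the root label fixed; it is admissible if (i) whenever $u$ is the parent of $v$ and $v$ the parent of $w$, $\ell(u)\ne\ell(w)$; (ii) for every edge $\{u,v\}$ there is another edge $\{u',v'\}$ with $\{\ell(u'),\ell(v')\}=\{\ell(u),\ell(v)\}$. Two labelings are isomorphic if one is obtained from the other by a permutation of $[N]$ (fixing the root label); an isomorphism class is thus identified with the partition of the vertex set into classes of equally labeled vertices ($N$ is assumed at least the number of vertices). The excess is $\Delta=\tfrac12|E|-|V|+1$, where $|E|$ is the number of edges and $|V|$ the number of distinct labels used (including the root's). *)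

theory Defs
  imports Complex_Main "HOL-Library.FuncSet"
begin

fun dfact :: "nat \<Rightarrow> nat" where
  "dfact 0 = 1"
| "dfact (Suc 0) = 1"
| "dfact (Suc (Suc n)) = Suc (Suc n) * dfact n"

text \<open>The tree T: vertices are the paths from the root (lists of child indices).
  A vertex of depth k lies at level t - k; the root (depth 0, level t) has 2m
  children, a vertex at depth k with 1 \<le> k < t (level t-k) has d (t-k) children,
  vertices of depth t (level 0) are leaves.\<close>
definition branch :: "nat \<Rightarrow> nat \<Rightarrow> (nat \<Rightarrow> nat) \<Rightarrow> nat \<Rightarrow> nat" where
  "branch t m d k = (if k = 0 then 2 * m else d (t - k))"

definition tree_verts :: "nat \<Rightarrow> nat \<Rightarrow> (nat \<Rightarrow> nat) \<Rightarrow> nat list set" where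
  "tree_verts t m d = {xs. length xs \<le> t \<and> (\<forall>j < length xs. xs ! j < branch t m d j)}"

definition tree_edges :: "nat \<Rightarrow> nat \<Rightarrow> (nat \<Rightarrow> nat) \<Rightarrow> nat list set set" where
  "tree_edges t m d = {{butlast xs, xs} | xs. xs \<in> tree_verts t m d \<and> xs \<noteq> []}"

definition labelings :: "nat \<Rightarrow> nat \<Rightarrow> (nat \<Rightarrow> nat) \<Rightarrow> nat \<Rightarrow> nat \<Rightarrow> (nat list \<Rightarrow> nat) set" where
  "labelings t m d N r = {l \<in> tree_verts t m d \<rightarrow>\<^sub>E {1..N}. l [] = r}"

definition admissible :: "nat \<Rightarrow> nat \<Rightarrow> (nat \<Rightarrow> nat) \<Rightarrow> (nat list \<Rightarrow> nat) \<Rightarrow> bool" where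
  "admissible t m d l \<longleftrightarrow>
     (\<forall>w \<in> tree_verts t m d. length w \<ge> 2 \<longrightarrow> l (butlast (butlast w)) \<noteq> l w) \<and>
     (\<forall>e \<in> tree_edges t m d. \<exists>e' \<in> tree_edges t m d. e' \<noteq> e \<and> l ` e' = l ` e)"

definition excess :: "nat \<Rightarrow> nat \<Rightarrow> (nat \<Rightarrow> nat) \<Rightarrow> (nat list \<Rightarrow> nat) \<Rightarrow> real" where
  "excess t m d l = real (card (tree_edges t m d)) / 2 - real (card (l ` tree_verts t m d)) + 1"

definition lab_iso :: "nat \<Rightarrow> nat \<Rightarrow> (nat \<Rightarrow> nat) \<Rightarrow> nat \<Rightarrow> nat \<Rightarrow> (nat list \<Rightarrow> nat) \<Rightarrow> (nat list \<Rightarrow> nat) \<Rightarrow> bool" where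
  "lab_iso t m d N r l l' \<longleftrightarrow>
     (\<exists>\<sigma>. bij_betw \<sigma> {1..N} {1..N} \<and> \<sigma> r = r \<and> (\<forall>v \<in> tree_verts t m d. l' v = \<sigma> (l v)))"

definition zero_excess_labelings :: "nat \<Rightarrow> nat \<Rightarrow> (nat \<Rightarrow> nat) \<Rightarrow> nat \<Rightarrow> nat \<Rightarrow> (nat list \<Rightarrow> nat) set" where
  "zero_excess_labelings t m d N r =
     {l \<in> labelings t m d N r. admissible t m d l \<and> excess t m d l = 0}"

definition num_classes :: "nat \<Rightarrow> nat \<Rightarrow> (nat \<Rightarrow> nat) \<Rightarrow> nat \<Rightarrow> nat \<Rightarrow> nat" where
  "num_classes t m d N r =
     card (zero_excess_labelings t m d N r //
           {(l, l'). l \<in> zero_excess_labelings t m d N r \<and> l' \<in> zero_excess_labelings t m d N r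
                     \<and> lab_iso t m d N r l l'})"

end

theory Submission
  imports Defs
begin

(* Zero excess makes a labeling rigid. Since 2 |labels| = |E| + 2 and every label edge (the
   pair of labels at the ends of a tree edge) is carried by at least two tree edges, the label
   edges by which the non-root labels are first reached already exhaust all label edges, and each
   of them is carried by exactly two tree edges. An induction on depth, using that no vertex
   repeats its grandparent's label, shows that every tree edge is the entry edge of its child's
   label. Consequently each non-root label sits on exactly two vertices, of equal depth, whose
   parents are equal or again carry a common label. So an isomorphism class is the same as a
   fixed-point-free, depth-preserving involution of the non-root vertices sending each vertex to
   a sibling or to a child of its parent's twin. These are counted depth by depth: the 2m children
   of the root are perfectly matched, and so are the 2 d_s children of every twin pair at level s,
   which gives the product of double factorials. *)

lemma card_eq_sum_card_fibers:
  assumes "finite A"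
  shows "card A = (\<Sum>y \<in> f ` A. card {x\<in>A. f x = y})"
proof -
  have "card A = card (\<Union>y \<in> f ` A. {x\<in>A. f x = y})"
    by (rule arg_cong[where f = card]) auto
  also have "\<dots> = (\<Sum>y \<in> f ` A. card {x\<in>A. f x = y})"
    by (rule card_UN_disjoint) (use assms in auto)
  finally show ?thesis .
qed

lemma card_eq_mult_card_image:
  assumes "finite A" "\<And>x. x \<in> A \<Longrightarrow> card {x'\<in>A. f x' = f x} = k"
  shows "card A = k * card (f ` A)"
proof -
  have "card A = (\<Sum>y \<in> f ` A. k)"
    unfolding card_eq_sum_card_fibers[OF assms(1), of f] using assms(2) by (intro sum.cong) auto
  then show ?thesis by simp
qed

lemma card_quotient_kernel:
  assumes "finite A"
  shows "card (A // {(x, y). x \<in> A \<and> y \<in> A \<and> g x = g y}) = card (g ` A)"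
proof -
  let ?R = "{(x, y). x \<in> A \<and> y \<in> A \<and> g x = g y}"
  let ?fiber = "\<lambda>c. {x \<in> A. g x = c}"
  have "?R `` {x} = ?fiber (g x)" if "x \<in> A" for x using that by auto
  then have "A // ?R = (\<lambda>x. ?fiber (g x)) ` A" unfolding quotient_def by auto
  then have "A // ?R = ?fiber ` g ` A" by (simp add: image_image)
  moreover have "inj_on ?fiber (g ` A)"
    by (rule inj_onI) blast
  ultimately show ?thesis by (simp add: card_image)
qed

lemma exists_bij_betw_relabeling:
  assumes "finite A" "l ` V \<subseteq> A" "l' ` V \<subseteq> A"
    and same_kernel: "\<forall>v \<in> V. \<forall>w \<in> V. l v = l w \<longleftrightarrow> l' v = l' w"
  obtains \<sigma> where "bij_betw \<sigma> A A" "\<And>v. v \<in> V \<Longrightarrow> \<sigma> (l v) = l' v"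
proof -
  define h where "h y = l' (inv_into V l y)" for y
  have h: "h (l v) = l' v" if "v \<in> V" for v
  proof -
    have "inv_into V l (l v) \<in> V" "l (inv_into V l (l v)) = l v"
      using that by (auto intro: inv_into_into f_inv_into_f)
    then show ?thesis unfolding h_def using same_kernel that by metis
  qed
  have "inj_on h (l ` V)"
    by (rule inj_onI) (auto simp: h same_kernel)
  moreover have "h ` l ` V = l' ` V" using h by (auto simp: image_iff)
  ultimately have bij_h: "bij_betw h (l ` V) (l' ` V)" by (simp add: bij_betw_def)
  have "card (A - l ` V) = card (A - l' ` V)"
    using bij_betw_same_card[OF bij_h] assms(1-3) by (simp add: card_Diff_subset finite_subset)
  then obtain g where bij_g: "bij_betw g (A - l ` V) (A - l' ` V)"
    using assms(1) by (metis finite_Diff finite_same_card_bij)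
  define \<sigma> where "\<sigma> y = (if y \<in> l ` V then h y else g y)" for y
  have "bij_betw \<sigma> (l ` V \<union> (A - l ` V)) (l' ` V \<union> (A - l' ` V))"
  proof (rule bij_betw_combine)
    show "bij_betw \<sigma> (l ` V) (l' ` V)"
      using bij_h by (rule bij_betw_cong[THEN iffD1, rotated]) (simp add: \<sigma>_def)
    show "bij_betw \<sigma> (A - l ` V) (A - l' ` V)"
      using bij_g by (rule bij_betw_cong[THEN iffD1, rotated]) (simp add: \<sigma>_def)
  qed simp
  moreover have "l ` V \<union> (A - l ` V) = A" "l' ` V \<union> (A - l' ` V) = A" using assms(2,3) by auto
  ultimately have "bij_betw \<sigma> A A" by simp
  moreover have "\<sigma> (l v) = l' v" if "v \<in> V" for v using h that by (simp add: \<sigma>_def)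
  ultimately show ?thesis using that by blast
qed

section \<open>Fixed-point-free involutions within the fibers of a map\<close>

definition fpf_involutions :: "'a set \<Rightarrow> ('a \<Rightarrow> 'b) \<Rightarrow> ('a \<Rightarrow> 'a) set" where
  "fpf_involutions L f =
     {\<rho> \<in> L \<rightarrow>\<^sub>E L. \<forall>x\<in>L. \<rho> (\<rho> x) = x \<and> \<rho> x \<noteq> x \<and> f (\<rho> x) = f x}"

lemma fpf_involutionsD:
  assumes "\<rho> \<in> fpf_involutions L f" "x \<in> L"
  shows "\<rho> x \<in> L" "\<rho> (\<rho> x) = x" "\<rho> x \<noteq> x" "f (\<rho> x) = f x"
  using assms unfolding fpf_involutions_def by auto

lemma fpf_involutions_undefined: "\<rho> \<in> fpf_involutions L f \<Longrightarrow> x \<notin> L \<Longrightarrow> \<rho> x = undefined"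
  unfolding fpf_involutions_def by auto

lemma finite_fpf_involutions: "finite L \<Longrightarrow> finite (fpf_involutions L f)"
  unfolding fpf_involutions_def by (rule finite_subset[of _ "L \<rightarrow>\<^sub>E L"]) (auto intro: finite_PiE)

lemma fpf_involutions_empty: "fpf_involutions {} f = {\<lambda>_. undefined}"
  unfolding fpf_involutions_def by auto

lemma fpf_involutions_split:
  assumes "a \<in> L"
  shows "fpf_involutions L f =
    (\<Union>b \<in> {x\<in>L. f x = f a} - {a}. (\<lambda>\<sigma>. \<sigma>(a := b, b := a)) ` fpf_involutions (L - {a, b}) f)"
    (is "_ = ?U")
proof
  show "fpf_involutions L f \<subseteq> ?U"
  proof
    fix \<rho> assume \<rho>: "\<rho> \<in> fpf_involutions L f"
    define b where "b = \<rho> a"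
    note \<rho>D = fpf_involutionsD[OF \<rho>]
    have b: "b \<in> {x\<in>L. f x = f a} - {a}"
      using \<rho>D[OF assms] unfolding b_def by auto
    have closed: "\<rho> x \<in> L - {a, b}" if "x \<in> L - {a, b}" for x
      using that \<rho>D[OF assms] \<rho>D[of x] unfolding b_def by (metis Diff_iff insertCI insertE singletonD)
    have "restrict \<rho> (L - {a, b}) \<in> fpf_involutions (L - {a, b}) f"
      using closed \<rho>D by (simp add: fpf_involutions_def)
    moreover have "\<rho> = (restrict \<rho> (L - {a, b}))(a := b, b := a)"
    proof
      fix x show "\<rho> x = ((restrict \<rho> (L - {a, b}))(a := b, b := a)) x"
        using \<rho>D[OF assms] fpf_involutions_undefined[OF \<rho>, of x] unfolding b_def
        by (cases "x \<in> L") auto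
    qed
    ultimately show "\<rho> \<in> ?U" using b by blast
  qed
next
  show "?U \<subseteq> fpf_involutions L f"
  proof
    fix \<rho> assume "\<rho> \<in> ?U"
    then obtain b \<sigma> where b: "b \<in> L" "f b = f a" "b \<noteq> a"
      and \<sigma>: "\<sigma> \<in> fpf_involutions (L - {a, b}) f" and \<rho>: "\<rho> = \<sigma>(a := b, b := a)"
      by blast
    note \<sigma>D = fpf_involutionsD[OF \<sigma>]
    show "\<rho> \<in> fpf_involutions L f"
      unfolding fpf_involutions_def \<rho>
    proof (intro CollectI conjI ballI PiE_I)
      fix x assume "x \<in> L"
      then show "(\<sigma>(a := b, b := a)) x \<in> L"
        and "(\<sigma>(a := b, b := a)) ((\<sigma>(a := b, b := a)) x) = x"
        and "(\<sigma>(a := b, b := a)) x \<noteq> x"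
        and "f ((\<sigma>(a := b, b := a)) x) = f x"
        using assms b \<sigma>D[of x] by (cases "x = a"; cases "x = b"; auto)+
    next
      fix x assume "x \<notin> L"
      then show "(\<sigma>(a := b, b := a)) x = undefined"
        using assms b fpf_involutions_undefined[OF \<sigma>] by auto
    qed
  qed
qed

lemma dfact_minus_1:
  assumes "2 \<le> c" shows "dfact (c - 1) = (c - 1) * dfact (c - 3)"
proof (cases "c = 2")
  case False
  then have "c - 1 = Suc (Suc (c - 3))" using assms by linarith
  then show ?thesis by simp
qed simp

lemma card_fpf_involutions_split:
  assumes "finite L" "a \<in> L"
  shows "card (fpf_involutions L f) =
    (\<Sum>b \<in> {x\<in>L. f x = f a} - {a}. card (fpf_involutions (L - {a, b}) f))"
proof -
  let ?ext = "\<lambda>b \<sigma>. \<sigma>(a := b, b := a)"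
  have "card (fpf_involutions L f) =
      (\<Sum>b \<in> {x\<in>L. f x = f a} - {a}. card (?ext b ` fpf_involutions (L - {a, b}) f))"
    unfolding fpf_involutions_split[OF assms(2)]
  proof (rule card_UN_disjoint)
    show "\<forall>b \<in> {x\<in>L. f x = f a} - {a}. \<forall>b' \<in> {x\<in>L. f x = f a} - {a}. b \<noteq> b' \<longrightarrow>
        ?ext b ` fpf_involutions (L - {a, b}) f \<inter> ?ext b' ` fpf_involutions (L - {a, b'}) f = {}"
      by (auto dest: fun_cong[of _ _ a])
  qed (use assms in \<open>auto intro: finite_fpf_involutions\<close>)
  also have "\<dots> = (\<Sum>b \<in> {x\<in>L. f x = f a} - {a}. card (fpf_involutions (L - {a, b}) f))"
  proof (intro sum.cong refl card_image inj_onI ext)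
    fix b \<sigma> \<sigma>' x
    assume \<sigma>: "\<sigma> \<in> fpf_involutions (L - {a, b}) f" "\<sigma>' \<in> fpf_involutions (L - {a, b}) f"
      and eq: "?ext b \<sigma> = ?ext b \<sigma>'"
    show "\<sigma> x = \<sigma>' x"
    proof (cases "x = a \<or> x = b")
      case True
      then show ?thesis using \<sigma> by (auto simp: fpf_involutions_undefined)
    next
      case False
      then show ?thesis using fun_cong[OF eq, of x] by simp
    qed
  qed
  finally show ?thesis .
qed

lemma card_fiber_Diff_pair:
  assumes "finite L" "a \<in> L" "b \<in> L" "b \<noteq> a" "f b = f a"
  shows "card {x \<in> L - {a, b}. f x = f a} = card {x\<in>L. f x = f a} - 2"
    and "q \<noteq> f a \<Longrightarrow> card {x \<in> L - {a, b}. f x = q} = card {x\<in>L. f x = q}"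
proof -
  have fiber: "{x \<in> L - {a, b}. f x = q} = {x\<in>L. f x = q} - {a, b}" for q by auto
  show "card {x \<in> L - {a, b}. f x = f a} = card {x\<in>L. f x = f a} - 2"
    unfolding fiber using assms by (auto simp: card_Diff_subset)
  assume "q \<noteq> f a"
  then have "{x\<in>L. f x = q} - {a, b} = {x\<in>L. f x = q}" using assms(5) by auto
  then show "card {x \<in> L - {a, b}. f x = q} = card {x\<in>L. f x = q}" unfolding fiber by simp
qed

(* Taking the product over any finite Q containing the image is harmless, as an empty fiber
   contributes dfact (0 - 1) = 1; it keeps the index set fixed through the induction. *)
lemma card_fpf_involutions:
  assumes "finite L" "finite Q" "f ` L \<subseteq> Q" "\<And>q. q \<in> Q \<Longrightarrow> even (card {x\<in>L. f x = q})"
  shows "card (fpf_involutions L f) = (\<Prod>q\<in>Q. dfact (card {x\<in>L. f x = q} - 1))"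
  using assms(1,3,4)
proof (induction "card L" arbitrary: L rule: less_induct)
  case less
  show ?case
  proof (cases "L = {}")
    case True
    then show ?thesis by (simp add: fpf_involutions_empty)
  next
    case False
    then obtain a where a: "a \<in> L" by blast
    define F where "F = {x\<in>L. f x = f a}"
    define P where "P = (\<Prod>q \<in> Q - {f a}. dfact (card {x\<in>L. f x = q} - 1))"
    have F: "finite F" "a \<in> F" "even (card F)"
      using less.prems a unfolding F_def by auto
    moreover have "card F \<noteq> 0" using F by auto
    ultimately have card_F: "2 \<le> card F" by presburger
    have fa: "f a \<in> Q" using a less.prems(2) by auto
    have removed: "card (fpf_involutions (L - {a, b}) f) = dfact (card F - 3) * P"
      if b: "b \<in> F - {a}" for b
    proof -
      have bL: "b \<in> L" "b \<noteq> a" "f b = f a" using b unfolding F_def by auto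
      note card_fa = card_fiber_Diff_pair(1)[OF less.prems(1) a bL, folded F_def]
        and card_other = card_fiber_Diff_pair(2)[OF less.prems(1) a bL]
      have "card (fpf_involutions (L - {a, b}) f) =
          (\<Prod>q\<in>Q. dfact (card {x \<in> L - {a, b}. f x = q} - 1))"
      proof (rule less.hyps)
        show "card (L - {a, b}) < card L"
          using a b less.prems(1) by (intro psubset_card_mono) auto
        show "even (card {x \<in> L - {a, b}. f x = q})" if "q \<in> Q" for q
          using less.prems(3)[OF that] F(3) card_F card_fa card_other by (cases "q = f a") auto
      qed (use less.prems in auto)
      also have "\<dots> = dfact (card F - 2 - 1) * P"
        unfolding prod.remove[OF assms(2) fa] card_fa P_def
        using card_other by (auto intro!: prod.cong)
      finally show ?thesis by (simp add: numeral_3_eq_3)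
    qed
    have "card (fpf_involutions L f) = (\<Sum>b \<in> F - {a}. card (fpf_involutions (L - {a, b}) f))"
      unfolding F_def by (rule card_fpf_involutions_split[OF less.prems(1) a])
    also have "\<dots> = (card F - 1) * (dfact (card F - 3) * P)"
      using removed F by simp
    also have "\<dots> = dfact (card F - 1) * P"
      using dfact_minus_1[OF card_F] by simp
    also have "\<dots> = (\<Prod>q\<in>Q. dfact (card {x\<in>L. f x = q} - 1))"
      unfolding prod.remove[OF assms(2) fa] P_def F_def ..
    finally show ?thesis .
  qed
qed

section \<open>Rooted trees as prefix-closed sets of lists\<close>

lemma inj_on_parent_edge: "inj_on (\<lambda>v. {butlast v, v}) (- {[]})"
proof (rule inj_onI)
  fix v w :: "'a list"
  assume "v \<in> - {[]}" "w \<in> - {[]}" and eq: "{butlast v, v} = {butlast w, w}"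
  then have "length (butlast v) < length v" "length (butlast w) < length w" by auto
  moreover have "v = w \<or> (v = butlast w \<and> w = butlast v)" using eq by (auto simp: doubleton_eq_iff)
  ultimately show "v = w" by (metis less_asym)
qed

locale prefix_tree =
  fixes V :: "'a list set"
  assumes finite_V: "finite V"
    and Nil_in_V: "[] \<in> V"
    and butlast_in_V: "v \<in> V \<Longrightarrow> butlast v \<in> V"
begin

definition edges :: "'a list set set" where
  "edges = (\<lambda>v. {butlast v, v}) ` (V - {[]})"

definition twin_involutions :: "('a list \<Rightarrow> 'a list) set" where
  "twin_involutions = {\<pi> \<in> (V - {[]}) \<rightarrow>\<^sub>E (V - {[]}). \<forall>v \<in> V - {[]}.
     \<pi> (\<pi> v) = v \<and> \<pi> v \<noteq> v \<and> length (\<pi> v) = length v \<and>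
     (butlast (\<pi> v) = butlast v \<or> butlast (\<pi> v) = \<pi> (butlast v))}"

definition twin_labeling :: "('a list \<Rightarrow> 'b) \<Rightarrow> ('a list \<Rightarrow> 'a list) \<Rightarrow> bool" where
  "twin_labeling l \<pi> \<longleftrightarrow> \<pi> \<in> twin_involutions \<and>
     (\<forall>v\<in>V. \<forall>w\<in>V. l v = l w \<longleftrightarrow> v = w \<or> (v \<noteq> [] \<and> w = \<pi> v))"

lemma finite_edges: "finite edges"
  unfolding edges_def using finite_V by simp

lemma card_edges: "card edges = card V - 1"
proof -
  have "card edges = card (V - {[]})"
    unfolding edges_def by (rule card_image) (rule inj_on_subset[OF inj_on_parent_edge], auto)
  then show ?thesis using finite_V Nil_in_V by simp
qed

lemma finite_twin_involutions: "finite twin_involutions"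
  unfolding twin_involutions_def
  by (rule finite_subset[of _ "(V - {[]}) \<rightarrow>\<^sub>E (V - {[]})"]) (auto intro!: finite_PiE finite_V)

lemma twin_involutionsD:
  assumes "\<pi> \<in> twin_involutions" "v \<in> V" "v \<noteq> []"
  shows "\<pi> v \<in> V" "\<pi> v \<noteq> []" "\<pi> (\<pi> v) = v" "\<pi> v \<noteq> v" "length (\<pi> v) = length v"
    "butlast (\<pi> v) = butlast v \<or> butlast (\<pi> v) = \<pi> (butlast v)"
  using assms unfolding twin_involutions_def by auto

lemma twin_involutions_undefined:
  "\<pi> \<in> twin_involutions \<Longrightarrow> v \<notin> V - {[]} \<Longrightarrow> \<pi> v = undefined"
  unfolding twin_involutions_def by auto

lemma twin_labeling_unique:
  assumes "twin_labeling l \<pi>" "twin_labeling l \<pi>'"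
  shows "\<pi> = \<pi>'"
proof
  fix v
  have \<pi>: "\<pi> \<in> twin_involutions" "\<pi>' \<in> twin_involutions"
    using assms unfolding twin_labeling_def by auto
  show "\<pi> v = \<pi>' v"
  proof (cases "v \<in> V - {[]}")
    case True
    then have \<pi>v: "\<pi> v \<in> V" "\<pi> v \<noteq> v" using twin_involutionsD[OF \<pi>(1)] by auto
    then have "l v = l (\<pi> v)" using assms(1) True unfolding twin_labeling_def by auto
    then show ?thesis using assms(2) True \<pi>v unfolding twin_labeling_def by auto
  next
    case False
    then show ?thesis using twin_involutions_undefined[OF \<pi>(1)] twin_involutions_undefined[OF \<pi>(2)]
      by simp
  qed
qed

lemma twin_involutions_parent:
  assumes "\<pi> \<in> twin_involutions" "v \<in> V" "v \<noteq> []"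
  shows "butlast (\<pi> v) = butlast v \<or> (butlast v \<noteq> [] \<and> butlast (\<pi> v) = \<pi> (butlast v))"
proof (cases "butlast v = []")
  case True
  then have "length (\<pi> v) = 1" using twin_involutionsD(5)[OF assms] assms(3)
    by (cases v rule: rev_cases) auto
  then show ?thesis using True by (cases "\<pi> v" rule: rev_cases) auto
qed (use twin_involutionsD(6)[OF assms] in blast)

definition twin_map :: "('a list \<Rightarrow> 'b) \<Rightarrow> 'a list \<Rightarrow> 'a list" where
  "twin_map l = restrict (\<lambda>v. THE w. w \<in> V \<and> w \<noteq> v \<and> l w = l v) (V - {[]})"

end

locale zero_excess_labeling = prefix_tree V for V :: "'a list set" +
  fixes l :: "'a list \<Rightarrow> 'b"
  assumes grandparent_label: "w \<in> V \<Longrightarrow> 2 \<le> length w \<Longrightarrow> l (butlast (butlast w)) \<noteq> l w"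
    and edge_label_repeated: "e \<in> edges \<Longrightarrow> \<exists>e' \<in> edges. e' \<noteq> e \<and> l ` e' = l ` e"
    and excess_zero: "real (card edges) / 2 - real (card (l ` V)) + 1 = 0"

context prefix_tree
begin

lemma twin_labeling_parent_label:
  assumes tl: "twin_labeling l \<pi>" and v: "v \<in> V" "v \<noteq> []"
  shows "l (butlast (\<pi> v)) = l (butlast v)"
proof -
  have \<pi>: "\<pi> \<in> twin_involutions" and eq_iff: "\<And>v w. v \<in> V \<Longrightarrow> w \<in> V \<Longrightarrow>
      l v = l w \<longleftrightarrow> v = w \<or> (v \<noteq> [] \<and> w = \<pi> v)"
    using tl unfolding twin_labeling_def by auto
  consider "butlast (\<pi> v) = butlast v" | "butlast v \<noteq> []" "butlast (\<pi> v) = \<pi> (butlast v)"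
    using twin_involutions_parent[OF \<pi> v] by blast
  then show ?thesis
  proof cases
    case 2
    have bV: "butlast v \<in> V" using butlast_in_V[OF v(1)] .
    have "l (butlast v) = l (\<pi> (butlast v))"
      using eq_iff[OF bV twin_involutionsD(1)[OF \<pi> bV 2(1)]] 2(1) by simp
    then show ?thesis using 2(2) by simp
  qed simp
qed

lemma twin_labeling_grandparent_label:
  assumes tl: "twin_labeling l \<pi>" and w: "w \<in> V" "2 \<le> length w"
  shows "l (butlast (butlast w)) \<noteq> l w"
proof
  let ?g = "butlast (butlast w)"
  have \<pi>: "\<pi> \<in> twin_involutions" and eq_iff: "l ?g = l w \<longleftrightarrow> ?g = w \<or> (?g \<noteq> [] \<and> w = \<pi> ?g)"
    using tl butlast_in_V w(1) unfolding twin_labeling_def by auto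
  have gV: "?g \<in> V" using butlast_in_V w(1) by blast
  have "length ?g < length w" using w(2) by simp
  then have "?g \<noteq> w" by (metis less_irrefl)
  moreover assume "l ?g = l w"
  ultimately have "?g \<noteq> []" "w = \<pi> ?g" using eq_iff by blast+
  then show False using twin_involutionsD(5)[OF \<pi> gV] w(2) by simp
qed

lemma twin_labeling_edge_label_repeated:
  assumes tl: "twin_labeling l \<pi>" and e: "e \<in> edges"
  shows "\<exists>e' \<in> edges. e' \<noteq> e \<and> l ` e' = l ` e"
proof -
  have \<pi>: "\<pi> \<in> twin_involutions" using tl unfolding twin_labeling_def by blast
  obtain v where v: "v \<in> V" "v \<noteq> []" and e: "e = {butlast v, v}"
    using e unfolding edges_def by auto
  note \<pi>v = twin_involutionsD[OF \<pi> v]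
  have same_label: "l v = l (\<pi> v)" using tl v \<pi>v(1) unfolding twin_labeling_def by simp
  have "\<pi> v \<noteq> butlast v"
  proof
    assume "\<pi> v = butlast v"
    then have "length (\<pi> v) = length v - 1" by simp
    then show False using \<pi>v(5) v(2) by (cases v) auto
  qed
  then have "\<pi> v \<notin> e" using \<pi>v(4) unfolding e by simp
  define e' where "e' = {butlast (\<pi> v), \<pi> v}"
  have "e' \<noteq> e" using \<open>\<pi> v \<notin> e\<close> unfolding e'_def by blast
  moreover have "e' \<in> edges"
    unfolding edges_def e'_def using \<pi>v(1,2) by (intro image_eqI[of _ _ "\<pi> v"]) auto
  moreover have "l ` e' = l ` e"
    unfolding e e'_def image_insert image_empty
    by (simp only: twin_labeling_parent_label[OF tl v] flip: same_label)
  ultimately show ?thesis by blast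
qed

lemma twin_labeling_card_labels:
  assumes tl: "twin_labeling l \<pi>"
  shows "card edges = 2 * (card (l ` V) - 1)"
proof -
  have \<pi>: "\<pi> \<in> twin_involutions" and eq_iff: "\<And>v w. v \<in> V \<Longrightarrow> w \<in> V \<Longrightarrow>
      l v = l w \<longleftrightarrow> v = w \<or> (v \<noteq> [] \<and> w = \<pi> v)"
    using tl unfolding twin_labeling_def by auto
  have pairs: "card {w \<in> V - {[]}. l w = l v} = 2" if "v \<in> V - {[]}" for v
  proof -
    have v: "v \<in> V" "v \<noteq> []" using that by auto
    note \<pi>v = twin_involutionsD[OF \<pi> v]
    have same_label: "l v = l (\<pi> v)" using eq_iff[OF v(1) \<pi>v(1)] v(2) by simp
    have "{w \<in> V - {[]}. l w = l v} = {v, \<pi> v}"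
    proof (intro set_eqI iffI)
      fix w assume "w \<in> {w \<in> V - {[]}. l w = l v}"
      then show "w \<in> {v, \<pi> v}" using eq_iff[OF v(1), of w] by auto
    next
      fix w assume "w \<in> {v, \<pi> v}"
      then show "w \<in> {w \<in> V - {[]}. l w = l v}" using same_label v \<pi>v(1,2) by auto
    qed
    then show ?thesis using \<pi>v(4) by simp
  qed
  have "l [] \<notin> l ` (V - {[]})"
  proof
    assume "l [] \<in> l ` (V - {[]})"
    then obtain w where "w \<in> V" "w \<noteq> []" "l [] = l w" by auto
    then show False using eq_iff[OF Nil_in_V] by blast
  qed
  moreover have "l ` V = insert (l []) (l ` (V - {[]}))" using Nil_in_V by auto
  ultimately have "card (l ` V) = card (l ` (V - {[]})) + 1" using finite_V by simp
  moreover have "card edges = 2 * card (l ` (V - {[]}))"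
    unfolding card_edges using card_eq_mult_card_image[OF _ pairs] finite_V Nil_in_V by simp
  ultimately show ?thesis by simp
qed

lemma twin_labeling_zero_excess:
  assumes "twin_labeling l \<pi>"
  shows "zero_excess_labeling V l"
proof unfold_locales
  fix w assume "w \<in> V" "2 \<le> length w"
  then show "l (butlast (butlast w)) \<noteq> l w" by (rule twin_labeling_grandparent_label[OF assms])
next
  fix e assume "e \<in> edges"
  then show "\<exists>e' \<in> edges. e' \<noteq> e \<and> l ` e' = l ` e"
    by (rule twin_labeling_edge_label_repeated[OF assms])
next
  show "real (card edges) / 2 - real (card (l ` V)) + 1 = 0"
  proof -
    have "0 < card (l ` V)" using Nil_in_V finite_V by (auto simp: card_gt_0_iff)
    then have "real (card edges) = 2 * real (card (l ` V)) - 2"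
      using twin_labeling_card_labels[OF assms] by (simp add: of_nat_diff)
    then show ?thesis by (simp add: field_simps)
  qed
qed

end

section \<open>Zero-excess labelings pair up the non-root vertices\<close>

context zero_excess_labeling
begin

definition label_edges :: "'b set set" where
  "label_edges = (\<lambda>e. l ` e) ` edges"

definition min_depth :: "'b \<Rightarrow> nat" where
  "min_depth y = Min (length ` {v \<in> V. l v = y})"

definition shallowest :: "'b \<Rightarrow> 'a list" where
  "shallowest y = (SOME v. v \<in> V \<and> l v = y \<and> length v = min_depth y)"

definition entry :: "'b \<Rightarrow> 'b set" where
  "entry y = {l (butlast (shallowest y)), y}"

lemma card_labels: "2 * card (l ` V) = card edges + 2"
proof -
  have "2 * real (card (l ` V)) = real (card edges) + 2" using excess_zero by simp
  then show ?thesis by linarith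
qed

lemma min_depth_le: "v \<in> V \<Longrightarrow> min_depth (l v) \<le> length v"
  unfolding min_depth_def by (rule Min_le) (use finite_V in auto)

lemma min_depth_Nil: "min_depth (l []) = 0"
  using min_depth_le[OF Nil_in_V] by simp

lemma shallowest:
  assumes "y \<in> l ` V"
  shows "shallowest y \<in> V" "l (shallowest y) = y" "length (shallowest y) = min_depth y"
proof -
  have "min_depth y \<in> length ` {v \<in> V. l v = y}"
    unfolding min_depth_def by (rule Min_in) (use finite_V assms in auto)
  then have "\<exists>v. v \<in> V \<and> l v = y \<and> length v = min_depth y" by auto
  then have "shallowest y \<in> V \<and> l (shallowest y) = y \<and> length (shallowest y) = min_depth y"
    unfolding shallowest_def by (rule someI_ex)
  then show "shallowest y \<in> V" "l (shallowest y) = y" "length (shallowest y) = min_depth y"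
    by auto
qed

lemma min_depth_parent_less:
  assumes "y \<in> l ` V" "y \<noteq> l []"
  shows "min_depth (l (butlast (shallowest y))) < min_depth y"
proof -
  have "shallowest y \<noteq> []" using shallowest[OF assms(1)] assms(2) by auto
  then have "length (butlast (shallowest y)) < length (shallowest y)" by simp
  then have "length (butlast (shallowest y)) < min_depth y" using shallowest(3)[OF assms(1)] by simp
  moreover have "butlast (shallowest y) \<in> V" using butlast_in_V shallowest(1)[OF assms(1)] .
  ultimately show ?thesis using min_depth_le le_less_trans by blast
qed

lemma entry_in_label_edges:
  assumes "y \<in> l ` V" "y \<noteq> l []"
  shows "entry y \<in> label_edges"
proof -
  have "shallowest y \<noteq> []" using shallowest[OF assms(1)] assms(2) by auto
  then have "{butlast (shallowest y), shallowest y} \<in> edges"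
    unfolding edges_def using shallowest(1)[OF assms(1)] by (intro imageI) simp
  moreover have "entry y = l ` {butlast (shallowest y), shallowest y}"
    unfolding entry_def using shallowest(2)[OF assms(1)] by simp
  ultimately show ?thesis unfolding label_edges_def by (rule rev_image_eqI)
qed

lemma inj_on_entry: "inj_on entry (l ` V - {l []})"
proof (rule inj_onI)
  fix y y' assume y: "y \<in> l ` V - {l []}" and y': "y' \<in> l ` V - {l []}" and eq: "entry y = entry y'"
  show "y = y'"
  proof (rule ccontr)
    assume "y \<noteq> y'"
    then have y'_eq: "l (butlast (shallowest y)) = y'" and y_eq: "y = l (butlast (shallowest y'))"
      using eq unfolding entry_def doubleton_eq_iff by blast+
    have "min_depth y' < min_depth y" using min_depth_parent_less[of y] y unfolding y'_eq by blast
    moreover have "min_depth y < min_depth y'"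
      using min_depth_parent_less[of y'] y' unfolding y_eq[symmetric] by blast
    ultimately show False by simp
  qed
qed

lemma two_le_card_label_edge_fiber:
  assumes "le \<in> label_edges"
  shows "2 \<le> card {e \<in> edges. l ` e = le}"
proof -
  obtain e where e: "e \<in> edges" "l ` e = le" using assms unfolding label_edges_def by blast
  obtain e' where e': "e' \<in> edges" "e' \<noteq> e" "l ` e' = l ` e"
    using edge_label_repeated[OF e(1)] by blast
  have "{e, e'} \<subseteq> {x \<in> edges. l ` x = le}" using e e' by simp
  then have "card {e, e'} \<le> card {x \<in> edges. l ` x = le}"
    by (rule card_mono[rotated]) (simp add: finite_edges)
  then show ?thesis using e'(2) by simp
qed

lemma entry_image_eq_label_edges: "entry ` (l ` V - {l []}) = label_edges"
  and card_label_edges: "2 * card label_edges = card edges"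
proof -
  have "card edges = (\<Sum>le \<in> label_edges. card {e \<in> edges. l ` e = le})"
    unfolding label_edges_def by (rule card_eq_sum_card_fibers[OF finite_edges])
  also have "\<dots> \<ge> (\<Sum>le \<in> label_edges. 2)"
    by (rule sum_mono) (rule two_le_card_label_edge_fiber)
  finally have upper: "2 * card label_edges \<le> card edges" by simp
  have sub: "entry ` (l ` V - {l []}) \<subseteq> label_edges" using entry_in_label_edges by auto
  have "card (entry ` (l ` V - {l []})) = card (l ` V) - 1"
    using card_image[OF inj_on_entry] finite_V Nil_in_V by (simp add: card_Diff_singleton)
  then have lower: "2 * card (entry ` (l ` V - {l []})) = card edges" using card_labels by linarith
  moreover have "finite label_edges" unfolding label_edges_def using finite_edges by simp
  ultimately show "2 * card label_edges = card edges"
    using upper card_mono[OF \<open>finite label_edges\<close> sub] by linarith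
  then show "entry ` (l ` V - {l []}) = label_edges"
    using card_subset_eq[OF \<open>finite label_edges\<close> sub] lower by simp
qed

lemma card_label_edge_fiber:
  assumes "le \<in> label_edges"
  shows "card {e \<in> edges. l ` e = le} = 2"
proof (rule ccontr)
  assume "card {e \<in> edges. l ` e = le} \<noteq> 2"
  then have "2 < card {e \<in> edges. l ` e = le}" using two_le_card_label_edge_fiber[OF assms] by simp
  then have "(\<Sum>le \<in> label_edges. 2) < (\<Sum>le \<in> label_edges. card {e \<in> edges. l ` e = le})"
    using assms two_le_card_label_edge_fiber finite_edges
    by (intro sum_strict_mono_ex1) (auto simp: label_edges_def)
  also have "\<dots> = card edges"
    unfolding label_edges_def by (rule card_eq_sum_card_fibers[OF finite_edges, symmetric])
  finally show False using card_label_edges by simp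
qed

lemma label_edge_is_entry:
  assumes "v \<in> V" "v \<noteq> []"
  obtains y where "y \<in> l ` V" "y \<noteq> l []" "{l (butlast v), l v} = entry y"
proof -
  have "{butlast v, v} \<in> edges" unfolding edges_def using assms by (intro imageI) simp
  then have "l ` {butlast v, v} \<in> entry ` (l ` V - {l []})"
    unfolding entry_image_eq_label_edges label_edges_def by (rule imageI)
  then obtain y where "y \<in> l ` V - {l []}" "l ` {butlast v, v} = entry y" by (rule imageE)
  then show ?thesis by (intro that[of y]) auto
qed

lemma entry_ne: "y \<in> l ` V \<Longrightarrow> y \<noteq> l [] \<Longrightarrow> l (butlast (shallowest y)) \<noteq> y"
  using min_depth_parent_less[of y] by (intro notI) simp

(* The second conjunct is what carries the induction: were the parent's label the one entered
   along the edge, the grandparent would carry the child's label, which admissibility forbids. *)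
lemma depth_and_entry:
  assumes "v \<in> V"
  shows "min_depth (l v) = length v \<and> (v \<noteq> [] \<longrightarrow> entry (l v) = {l (butlast v), l v})"
  using assms
proof (induction "length v" arbitrary: v rule: less_induct)
  case less
  show ?case
  proof (cases "v = []")
    case True
    then show ?thesis using min_depth_Nil by simp
  next
    case False
    let ?p = "butlast v"
    have pV: "?p \<in> V" using butlast_in_V[OF less.prems] .
    have IH: "min_depth (l ?p) = length ?p" "?p \<noteq> [] \<Longrightarrow> entry (l ?p) = {l (butlast ?p), l ?p}"
      using less.hyps[OF _ pV] False by auto
    obtain y where y: "y \<in> l ` V" "y \<noteq> l []" and edge: "{l ?p, l v} = entry y"
      using label_edge_is_entry[OF less.prems False] .
    let ?a = "l (butlast (shallowest y))"
    have "?a \<noteq> y" using entry_ne[OF y] .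
    then consider "l ?p = ?a" "l v = y" | "l ?p = y" "l v = ?a"
      using edge unfolding entry_def doubleton_eq_iff by blast
    then show ?thesis
    proof cases
      case 1
      have "shallowest y \<noteq> []" using shallowest[OF y(1)] y(2) by auto
      then have "0 < min_depth y" using shallowest(3)[OF y(1)] by (metis length_greater_0_conv)
      moreover have "min_depth ?a \<le> length (butlast (shallowest y))"
        using min_depth_le butlast_in_V[OF shallowest(1)[OF y(1)]] by blast
      ultimately have "length v \<le> min_depth (l v)"
        using IH(1) 1 shallowest(3)[OF y(1)] False by simp
      then show ?thesis using min_depth_le[OF less.prems] edge 1 by simp
    next
      case 2
      have "?p \<noteq> []" using 2(1) y(2) by auto
      then have "{l (butlast ?p), l ?p} = {l v, l ?p}"
        using IH(2) edge 2 unfolding entry_def by (simp add: insert_commute)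
      moreover have "l v \<noteq> l ?p" using \<open>?a \<noteq> y\<close> 2 by simp
      ultimately have "l (butlast ?p) = l v" by (auto simp: doubleton_eq_iff)
      moreover have "2 \<le> length v"
        using \<open>?p \<noteq> []\<close> by (cases v rule: rev_cases) (auto simp: Suc_le_eq)
      ultimately show ?thesis using grandparent_label[OF less.prems] by blast
    qed
  qed
qed

lemma min_depth_label: "v \<in> V \<Longrightarrow> min_depth (l v) = length v"
  using depth_and_entry by blast

lemma entry_label: "v \<in> V \<Longrightarrow> v \<noteq> [] \<Longrightarrow> entry (l v) = {l (butlast v), l v}"
  using depth_and_entry by blast

lemma label_eq_root_iff: "v \<in> V \<Longrightarrow> l v = l [] \<longleftrightarrow> v = []"
  using min_depth_label[of v] min_depth_Nil by auto

lemma parent_label: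
  assumes "v \<in> V" "v \<noteq> []"
  shows "l (butlast v) = l (butlast (shallowest (l v)))"
proof -
  have y: "l v \<in> l ` V" "l v \<noteq> l []" using assms label_eq_root_iff by auto
  have "{l (butlast v), l v} = {l (butlast (shallowest (l v))), l v}"
    using entry_label[OF assms] unfolding entry_def by simp
  then show ?thesis using entry_ne[OF y] by (auto simp: doubleton_eq_iff)
qed

lemma card_label_class:
  assumes "v \<in> V" "v \<noteq> []"
  shows "card {w \<in> V. l w = l v} = 2"
proof -
  let ?y = "l v"
  have y: "?y \<in> l ` V" "?y \<noteq> l []" using assms label_eq_root_iff by auto
  let ?edge = "\<lambda>w. {butlast w, w}"
  have "?edge ` {w \<in> V. l w = ?y} = {e \<in> edges. l ` e = entry ?y}"
  proof (intro equalityI subsetI)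
    fix e assume "e \<in> ?edge ` {w \<in> V. l w = ?y}"
    then obtain w where "w \<in> {w \<in> V. l w = ?y}" and e: "e = ?edge w" by (rule imageE)
    then have w: "w \<in> V" "l w = ?y" by simp_all
    then have "w \<noteq> []" using y(2) by auto
    then have "e \<in> edges" unfolding e edges_def using w(1) by (intro imageI) simp
    moreover have "l ` e = entry ?y" using entry_label[OF w(1) \<open>w \<noteq> []\<close>] w(2) unfolding e by simp
    ultimately show "e \<in> {e \<in> edges. l ` e = entry ?y}" by simp
  next
    fix e assume "e \<in> {e \<in> edges. l ` e = entry ?y}"
    then have "e \<in> edges" and e_label: "l ` e = entry ?y" by simp_all
    from \<open>e \<in> edges\<close> obtain w where w: "w \<in> V - {[]}" and e: "e = ?edge w" unfolding edges_def by (rule imageE)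
    have "entry (l w) = entry ?y" using entry_label[of w] e_label w unfolding e by simp
    moreover have "l w \<in> l ` V - {l []}" using w label_eq_root_iff[of w] by auto
    ultimately have "l w = ?y" by (rule inj_onD[OF inj_on_entry]) (use y in simp)
    then show "e \<in> ?edge ` {w \<in> V. l w = ?y}" using w unfolding e by simp
  qed
  moreover have "inj_on ?edge {w \<in> V. l w = ?y}"
    by (rule inj_on_subset[OF inj_on_parent_edge]) (use y(2) in auto)
  then have "card (?edge ` {w \<in> V. l w = ?y}) = card {w \<in> V. l w = ?y}" by (rule card_image)
  ultimately have "card {w \<in> V. l w = ?y} = card {e \<in> edges. l ` e = entry ?y}" by simp
  also have "\<dots> = 2" by (rule card_label_edge_fiber[OF entry_in_label_edges[OF y]])
  finally show ?thesis .
qed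

lemma label_class_eq:
  assumes "v \<in> V" "v \<noteq> []"
  shows "{w \<in> V. l w = l v} = {v, twin_map l v}" and "twin_map l v \<noteq> v"
proof -
  obtain x y where xy: "{w \<in> V. l w = l v} = {x, y}" "x \<noteq> y"
    using card_label_class[OF assms] by (auto simp: card_2_iff)
  have "v \<in> {x, y}" using assms(1) unfolding xy(1)[symmetric] by simp
  then obtain w where v_class: "{w \<in> V. l w = l v} = {v, w}" and "w \<noteq> v"
    using xy by (auto simp: insert_commute)
  have "(THE w'. w' \<in> V \<and> w' \<noteq> v \<and> l w' = l v) = w"
  proof (rule the_equality)
    show "w \<in> V \<and> w \<noteq> v \<and> l w = l v" using v_class \<open>w \<noteq> v\<close> by blast
  next
    fix w' assume "w' \<in> V \<and> w' \<noteq> v \<and> l w' = l v"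
    then show "w' = w" using v_class by blast
  qed
  then have "twin_map l v = w" unfolding twin_map_def using assms by simp
  then show "{w \<in> V. l w = l v} = {v, twin_map l v}" "twin_map l v \<noteq> v"
    using v_class \<open>w \<noteq> v\<close> by simp_all
qed

lemma twin_map:
  assumes v: "v \<in> V" "v \<noteq> []"
  defines "\<pi> \<equiv> twin_map l"
  shows "\<pi> v \<in> V" "l (\<pi> v) = l v" "\<pi> v \<noteq> []" "\<pi> (\<pi> v) = v" "length (\<pi> v) = length v"
proof -
  have v_class: "{w \<in> V. l w = l v} = {v, \<pi> v}" "\<pi> v \<noteq> v"
    using label_class_eq[OF v] unfolding \<pi>_def by auto
  then show \<pi>V: "\<pi> v \<in> V" and same: "l (\<pi> v) = l v" by blast+
  show \<pi>_ne: "\<pi> v \<noteq> []"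
  proof
    assume "\<pi> v = []"
    then have "l v = l []" using same by simp
    then show False using label_eq_root_iff[OF v(1)] v(2) by simp
  qed
  have "{w \<in> V. l w = l (\<pi> v)} = {\<pi> v, \<pi> (\<pi> v)}" "\<pi> (\<pi> v) \<noteq> \<pi> v"
    using label_class_eq[OF \<pi>V \<pi>_ne] unfolding \<pi>_def by auto
  then show "\<pi> (\<pi> v) = v" using v_class same by (auto simp: doubleton_eq_iff)
  show "length (\<pi> v) = length v" using min_depth_label[OF \<pi>V] min_depth_label[OF v(1)] same by simp
qed

lemma twin_labeling_twin_map: "twin_labeling l (twin_map l)"
  unfolding twin_labeling_def
proof (intro conjI ballI)
  let ?\<pi> = "twin_map l"
  show "?\<pi> \<in> twin_involutions"
    unfolding twin_involutions_def
  proof (intro CollectI conjI ballI PiE_I)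
    fix v assume "v \<in> V - {[]}"
    then have v: "v \<in> V" "v \<noteq> []" by auto
    show "?\<pi> v \<in> V - {[]}" "?\<pi> (?\<pi> v) = v" "?\<pi> v \<noteq> v" "length (?\<pi> v) = length v"
      using twin_map[OF v] label_class_eq(2)[OF v] by auto
    show "butlast (?\<pi> v) = butlast v \<or> butlast (?\<pi> v) = ?\<pi> (butlast v)"
    proof (cases "butlast v = []")
      case True
      then have "length (?\<pi> v) = 1" using twin_map(5)[OF v] v(2) by (cases v rule: rev_cases) auto
      then show ?thesis using True by (cases "?\<pi> v" rule: rev_cases) auto
    next
      case False
      have "l (butlast (?\<pi> v)) = l (butlast v)"
        using parent_label[OF v] parent_label[OF twin_map(1,3)[OF v]] twin_map(2)[OF v] by simp
      then have "butlast (?\<pi> v) \<in> {w \<in> V. l w = l (butlast v)}"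
        using butlast_in_V[OF twin_map(1)[OF v]] by simp
      then show ?thesis using label_class_eq(1)[OF butlast_in_V[OF v(1)] False] by simp
    qed
  next
    fix v assume "v \<notin> V - {[]}"
    then show "?\<pi> v = undefined" unfolding twin_map_def by auto
  qed
next
  fix v w assume v: "v \<in> V" and w: "w \<in> V"
  show "l v = l w \<longleftrightarrow> v = w \<or> (v \<noteq> [] \<and> w = twin_map l v)"
  proof (cases "v = []")
    case True
    then show ?thesis using label_eq_root_iff[OF w] by auto
  next
    case False
    have "l v = l w \<longleftrightarrow> w \<in> {x \<in> V. l x = l v}" using w by auto
    then show ?thesis using label_class_eq(1)[OF v False] False by auto
  qed
qed

end

section \<open>Isomorphism classes and twin involutions\<close>

context prefix_tree
begin

lemma twin_labeling_relabel:
  assumes "twin_labeling l \<pi>" "inj_on \<sigma> (l ` V)"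
  shows "twin_labeling (\<sigma> \<circ> l) \<pi>"
proof -
  have "\<sigma> (l v) = \<sigma> (l w) \<longleftrightarrow> l v = l w" if "v \<in> V" "w \<in> V" for v w
    using assms(2) that by (auto dest: inj_onD)
  then show ?thesis using assms(1) unfolding twin_labeling_def by simp
qed

lemma twin_labeling_pair_coloring:
  assumes \<pi>: "\<pi> \<in> twin_involutions"
    and f: "inj_on f ((\<lambda>v. {v, \<pi> v}) ` (V - {[]}))" "r \<notin> f ` (\<lambda>v. {v, \<pi> v}) ` (V - {[]})"
  shows "twin_labeling (\<lambda>v. if v = [] then r else f {v, \<pi> v}) \<pi>"
  unfolding twin_labeling_def
proof (intro conjI ballI)
  fix v w assume v: "v \<in> V" and w: "w \<in> V"
  let ?l = "\<lambda>v. if v = [] then r else f {v, \<pi> v}"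
  have not_root: "f {x, \<pi> x} \<noteq> r" if "x \<in> V" "x \<noteq> []" for x
  proof -
    have "f {x, \<pi> x} \<in> f ` (\<lambda>v. {v, \<pi> v}) ` (V - {[]})" using that by (intro imageI) simp
    then show ?thesis using f(2) by metis
  qed
  show "?l v = ?l w \<longleftrightarrow> v = w \<or> (v \<noteq> [] \<and> w = \<pi> v)"
  proof (cases "v = []"; cases "w = []")
    assume "v = []" "w \<noteq> []"
    then show ?thesis using not_root[OF w] by auto
  next
    assume "v \<noteq> []" "w = []"
    then show ?thesis using not_root[OF v] twin_involutionsD(2)[OF \<pi> v] by auto
  next
    assume "v \<noteq> []" "w \<noteq> []"
    then have "?l v = ?l w \<longleftrightarrow> {v, \<pi> v} = {w, \<pi> w}"
      using v w by (simp add: inj_on_eq_iff[OF f(1)])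
    also have "\<dots> \<longleftrightarrow> w = v \<or> w = \<pi> v"
      using twin_involutionsD[OF \<pi> v \<open>v \<noteq> []\<close>] twin_involutionsD[OF \<pi> w \<open>w \<noteq> []\<close>]
      by (auto simp: doubleton_eq_iff)
    finally show ?thesis using \<open>v \<noteq> []\<close> \<open>w \<noteq> []\<close> by auto
  qed simp
qed (rule \<pi>)

lemma exists_twin_labeling:
  fixes N r :: nat
  assumes \<pi>: "\<pi> \<in> twin_involutions" and N: "card V \<le> N" and r: "r \<in> {1..N}"
  obtains l where "l \<in> V \<rightarrow>\<^sub>E {1..N}" "l [] = r" "twin_labeling l \<pi>"
proof -
  let ?pairs = "(\<lambda>v. {v, \<pi> v}) ` (V - {[]})"
  have "card ?pairs \<le> card (V - {[]})"
    by (rule card_image_le) (simp add: finite_V)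
  also have "\<dots> \<le> card ({1..N} - {r})" using N r finite_V Nil_in_V by simp
  finally have "\<exists>f. f ` ?pairs \<subseteq> {1..N} - {r} \<and> inj_on f ?pairs"
    by (rule card_le_inj[OF finite_imageI[OF finite_Diff[OF finite_V]] finite_Diff[OF finite_atLeastAtMost]])
  then obtain f where f: "f ` ?pairs \<subseteq> {1..N} - {r}" "inj_on f ?pairs"
    by (elim exE conjE)
  let ?l = "\<lambda>v. if v = [] then r else f {v, \<pi> v}"
  have "twin_labeling ?l \<pi>"
    by (rule twin_labeling_pair_coloring[OF \<pi> f(2)]) (use f(1) in \<open>metis DiffD2 singletonI subsetD\<close>)
  then have "twin_labeling (restrict ?l V) \<pi>"
    unfolding twin_labeling_def by simp
  moreover have "f {v, \<pi> v} \<in> {1..N}" if "v \<in> V" "v \<noteq> []" for v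
  proof -
    have "f {v, \<pi> v} \<in> f ` ?pairs" using that by (intro imageI) simp
    with f(1) show ?thesis by (rule subsetD[THEN DiffD1])
  qed
  then have "restrict ?l V \<in> V \<rightarrow>\<^sub>E {1..N}" using r by auto
  ultimately show ?thesis using Nil_in_V by (intro that[of "restrict ?l V"]) auto
qed

lemma relabeling_iff_same_twin_map:
  fixes l l' :: "'a list \<Rightarrow> nat"
  assumes l: "l \<in> V \<rightarrow>\<^sub>E {1..N}" "twin_labeling l (twin_map l)"
    and l': "l' \<in> V \<rightarrow>\<^sub>E {1..N}" "twin_labeling l' (twin_map l')"
    and root: "l [] = r" "l' [] = r"
  shows "(\<exists>\<sigma>. bij_betw \<sigma> {1..N} {1..N} \<and> \<sigma> r = r \<and> (\<forall>v \<in> V. l' v = \<sigma> (l v)))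
    \<longleftrightarrow> twin_map l = twin_map l'"
proof
  assume "\<exists>\<sigma>. bij_betw \<sigma> {1..N} {1..N} \<and> \<sigma> r = r \<and> (\<forall>v \<in> V. l' v = \<sigma> (l v))"
  then obtain \<sigma> where \<sigma>: "bij_betw \<sigma> {1..N} {1..N}" "\<forall>v \<in> V. l' v = \<sigma> (l v)" by blast
  have "l ` V \<subseteq> {1..N}" using l(1) by (auto dest: PiE_mem)
  then have "inj_on \<sigma> (l ` V)" by (rule inj_on_subset[OF bij_betw_imp_inj_on[OF \<sigma>(1)]])
  then have "twin_labeling (\<sigma> \<circ> l) (twin_map l)" by (rule twin_labeling_relabel[OF l(2)])
  moreover have "twin_labeling (\<sigma> \<circ> l) = twin_labeling l'"
    using \<sigma>(2) unfolding twin_labeling_def by (auto intro!: ext)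
  ultimately show "twin_map l = twin_map l'" using twin_labeling_unique l'(2) by metis
next
  assume same: "twin_map l = twin_map l'"
  have kernel: "l v = l w \<longleftrightarrow> l' v = l' w" if "v \<in> V" "w \<in> V" for v w
    using l(2) l'(2) that unfolding same twin_labeling_def by auto
  have ranges: "l ` V \<subseteq> {1..N}" "l' ` V \<subseteq> {1..N}" using l(1) l'(1) by (auto dest: PiE_mem)
  obtain \<sigma> where "bij_betw \<sigma> {1..N} {1..N}" "\<And>v. v \<in> V \<Longrightarrow> \<sigma> (l v) = l' v"
    using exists_bij_betw_relabeling[of "{1..N}" l V l'] ranges kernel by auto
  then show "\<exists>\<sigma>. bij_betw \<sigma> {1..N} {1..N} \<and> \<sigma> r = r \<and> (\<forall>v \<in> V. l' v = \<sigma> (l v))"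
    using root Nil_in_V by metis
qed

lemma card_zero_excess_classes:
  fixes N r :: nat
  assumes N: "card V \<le> N" and r: "r \<in> {1..N}"
  defines "Z \<equiv> {l \<in> V \<rightarrow>\<^sub>E {1..N}. l [] = r \<and> zero_excess_labeling V l}"
  shows "card (Z // {(l, l'). l \<in> Z \<and> l' \<in> Z \<and>
      (\<exists>\<sigma>. bij_betw \<sigma> {1..N} {1..N} \<and> \<sigma> r = r \<and> (\<forall>v \<in> V. l' v = \<sigma> (l v)))})
    = card twin_involutions"
proof -
  have twin: "twin_labeling l (twin_map l)" if "l \<in> Z" for l
    using that zero_excess_labeling.twin_labeling_twin_map unfolding Z_def by blast
  have "{(l, l'). l \<in> Z \<and> l' \<in> Z \<and>
      (\<exists>\<sigma>. bij_betw \<sigma> {1..N} {1..N} \<and> \<sigma> r = r \<and> (\<forall>v \<in> V. l' v = \<sigma> (l v)))}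
    = {(l, l'). l \<in> Z \<and> l' \<in> Z \<and> twin_map l = twin_map l'}"
    using relabeling_iff_same_twin_map twin unfolding Z_def by blast
  moreover have "finite Z"
    unfolding Z_def by (rule finite_subset[of _ "V \<rightarrow>\<^sub>E {1..N}"]) (auto intro: finite_PiE finite_V)
  moreover have "twin_map ` Z = twin_involutions"
  proof (intro equalityI subsetI)
    fix \<pi> assume "\<pi> \<in> twin_map ` Z"
    then show "\<pi> \<in> twin_involutions" using twin unfolding twin_labeling_def by blast
  next
    fix \<pi> assume \<pi>: "\<pi> \<in> twin_involutions"
    obtain l where l: "l \<in> V \<rightarrow>\<^sub>E {1..N}" "l [] = r" "twin_labeling l \<pi>"
      using exists_twin_labeling[OF \<pi> N r] .
    then have "l \<in> Z" unfolding Z_def using twin_labeling_zero_excess by blast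
    moreover have "twin_map l = \<pi>" using twin_labeling_unique[OF twin[OF \<open>l \<in> Z\<close>] l(3)] .
    ultimately show "\<pi> \<in> twin_map ` Z" by blast
  qed
  ultimately show ?thesis using card_quotient_kernel[of Z twin_map] by simp
qed

end

section \<open>Spherically symmetric trees\<close>

definition verts :: "nat \<Rightarrow> (nat \<Rightarrow> nat) \<Rightarrow> nat list set" where
  "verts n b = {xs. length xs \<le> n \<and> (\<forall>j < length xs. xs ! j < b j)}"

definition layer :: "nat \<Rightarrow> (nat \<Rightarrow> nat) \<Rightarrow> nat list set" where
  "layer k b = {xs. length xs = k \<and> (\<forall>j < k. xs ! j < b j)}"

lemma layer_0: "layer 0 b = {[]}"
  unfolding layer_def by auto

lemma layer_Suc: "layer (Suc k) b = (\<lambda>(xs, i). xs @ [i]) ` (layer k b \<times> {..<b k})"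
proof (intro equalityI subsetI)
  fix x assume x: "x \<in> layer (Suc k) b"
  then have "x \<noteq> []" unfolding layer_def by auto
  then have "x = butlast x @ [last x]" by simp
  moreover have "butlast x \<in> layer k b" "last x < b k"
    using x \<open>x \<noteq> []\<close> unfolding layer_def by (auto simp: nth_butlast last_conv_nth)
  ultimately show "x \<in> (\<lambda>(xs, i). xs @ [i]) ` (layer k b \<times> {..<b k})"
    by (intro image_eqI[of _ _ "(butlast x, last x)"]) auto
qed (auto simp: layer_def nth_append less_Suc_eq)

lemma finite_layer: "finite (layer k b)"
  by (induction k) (simp_all add: layer_0 layer_Suc)

lemma card_layer: "card (layer k b) = (\<Prod>j<k. b j)"
proof (induction k)
  case (Suc k)
  have "inj_on (\<lambda>(xs, i). xs @ [i]) (layer k b \<times> {..<b k})" by (rule inj_onI) auto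
  then have "card (layer (Suc k) b) = card (layer k b) * b k"
    unfolding layer_Suc by (simp add: card_image card_cartesian_product)
  then show ?case using Suc by simp
qed (simp add: layer_0)

lemma layer_iff: "k \<le> n \<Longrightarrow> x \<in> layer k b \<longleftrightarrow> x \<in> verts n b \<and> length x = k"
  unfolding verts_def layer_def by auto

lemma verts_le_iff: "k \<le> n \<Longrightarrow> x \<in> verts k b \<longleftrightarrow> x \<in> verts n b \<and> length x \<le> k"
  unfolding verts_def by auto

lemma verts_Suc: "verts (Suc n) b = verts n b \<union> layer (Suc n) b"
  unfolding verts_def layer_def by (auto simp: le_Suc_eq)

lemma layer_Suc_disjoint: "x \<in> layer (Suc n) b \<Longrightarrow> x \<notin> verts n b"
  unfolding verts_def layer_def by auto

lemma butlast_layer: "x \<in> layer (Suc n) b \<Longrightarrow> butlast x \<in> layer n b"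
  unfolding layer_def by (auto simp: nth_butlast)

lemma children_card:
  assumes "a \<in> layer n b"
  shows "card {x \<in> layer (Suc n) b. butlast x = a} = b n"
proof -
  have "{x \<in> layer (Suc n) b. butlast x = a} = (\<lambda>i. a @ [i]) ` {..<b n}"
    unfolding layer_Suc using assms by auto
  moreover have "inj_on (\<lambda>i. a @ [i]) {..<b n}" by (rule inj_onI) auto
  ultimately show ?thesis by (simp add: card_image)
qed

lemma prefix_tree_verts: "prefix_tree (verts n b)"
proof
  have "verts n b = (\<Union>k \<le> n. layer k b)" unfolding verts_def layer_def by auto
  then show "finite (verts n b)" by (simp add: finite_layer)
qed (auto simp: verts_def nth_butlast)

abbreviation twins :: "nat \<Rightarrow> (nat \<Rightarrow> nat) \<Rightarrow> (nat list \<Rightarrow> nat list) set" where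
  "twins n b \<equiv> prefix_tree.twin_involutions (verts n b)"

lemmas twinsD = prefix_tree.twin_involutionsD[OF prefix_tree_verts]
lemmas twins_undefined = prefix_tree.twin_involutions_undefined[OF prefix_tree_verts]
lemmas twins_parent = prefix_tree.twin_involutions_parent[OF prefix_tree_verts]

definition parent_pair :: "('a list \<Rightarrow> 'a list) \<Rightarrow> 'a list \<Rightarrow> 'a list set" where
  "parent_pair \<pi> x = {butlast x, \<pi> (butlast x)}"

lemma twins_layer:
  assumes "\<pi> \<in> twins n b" "1 \<le> n" "a \<in> layer n b"
  shows "\<pi> a \<in> layer n b" "\<pi> a \<noteq> a" "\<pi> (\<pi> a) = a"
proof -
  have a: "a \<in> verts n b" "a \<noteq> []" using assms(2,3) layer_iff[of n n a b] by auto
  show "\<pi> a \<in> layer n b" using twinsD(1,5)[OF assms(1) a] assms(3) layer_iff[of n n _ b] by auto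
  show "\<pi> a \<noteq> a" "\<pi> (\<pi> a) = a" using twinsD(3,4)[OF assms(1) a] by auto
qed

lemma parent_pair_eq_iff:
  assumes "\<pi> \<in> twins n b" "x \<in> layer (Suc n) b" "y \<in> layer (Suc n) b"
  shows "parent_pair \<pi> y = parent_pair \<pi> x \<longleftrightarrow> butlast y = butlast x \<or> butlast y = \<pi> (butlast x)"
proof (cases "n = 0")
  case True
  then show ?thesis using butlast_layer[OF assms(2)] butlast_layer[OF assms(3)]
    unfolding parent_pair_def by (simp add: layer_0)
next
  case False
  then show ?thesis
    using twins_layer[OF assms(1) _ butlast_layer[OF assms(2)]]
      twins_layer[OF assms(1) _ butlast_layer[OF assms(3)]]
    unfolding parent_pair_def by (auto simp: doubleton_eq_iff)
qed

lemma twins_Suc_preserves: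
  assumes "\<pi>' \<in> twins (Suc n) b"
  shows "\<And>v. v \<in> verts n b - {[]} \<Longrightarrow> \<pi>' v \<in> verts n b - {[]}"
    and "\<And>x. x \<in> layer (Suc n) b \<Longrightarrow> \<pi>' x \<in> layer (Suc n) b"
proof -
  fix v assume "v \<in> verts n b - {[]}"
  then have "v \<in> verts (Suc n) b" "v \<noteq> []" "length v \<le> n" using verts_le_iff[of n "Suc n" v b] by auto
  then show "\<pi>' v \<in> verts n b - {[]}"
    using twinsD(1,2,5)[OF assms] verts_le_iff[of n "Suc n" "\<pi>' v" b] by auto
next
  fix x assume x: "x \<in> layer (Suc n) b"
  then have "x \<in> verts (Suc n) b" "x \<noteq> []" using layer_iff[of "Suc n" "Suc n" x b] by auto
  then show "\<pi>' x \<in> layer (Suc n) b"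
    using twinsD(1,5)[OF assms] x layer_iff[of "Suc n" "Suc n" _ b] by auto
qed

lemma twins_restrict:
  assumes \<pi>': "\<pi>' \<in> twins (Suc n) b"
  shows "restrict \<pi>' (verts n b - {[]}) \<in> twins n b"
  unfolding prefix_tree.twin_involutions_def[OF prefix_tree_verts]
proof (intro CollectI conjI ballI PiE_I)
  fix v assume v: "v \<in> verts n b - {[]}"
  let ?\<pi> = "restrict \<pi>' (verts n b - {[]})"
  have v': "v \<in> verts (Suc n) b" "v \<noteq> []" using v verts_Suc by auto
  note maps = twins_Suc_preserves(1)[OF \<pi>']
  show "?\<pi> v \<in> verts n b - {[]}" "?\<pi> (?\<pi> v) = v" "?\<pi> v \<noteq> v" "length (?\<pi> v) = length v"
    using v maps[OF v] twinsD[OF \<pi>' v'] by auto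
  have "butlast v \<in> verts n b" using prefix_tree.butlast_in_V[OF prefix_tree_verts] v by blast
  then show "butlast (?\<pi> v) = butlast v \<or> butlast (?\<pi> v) = ?\<pi> (butlast v)"
    using twins_parent[OF \<pi>' v'] v by auto
qed auto

lemma twins_restrict_layer:
  assumes \<pi>': "\<pi>' \<in> twins (Suc n) b"
  shows "restrict \<pi>' (layer (Suc n) b)
    \<in> fpf_involutions (layer (Suc n) b) (parent_pair (restrict \<pi>' (verts n b - {[]})))"
  unfolding fpf_involutions_def
proof (intro CollectI conjI ballI PiE_I)
  fix x assume x: "x \<in> layer (Suc n) b"
  let ?\<rho> = "restrict \<pi>' (layer (Suc n) b)"
  have x': "x \<in> verts (Suc n) b" "x \<noteq> []" using x layer_iff[of "Suc n" "Suc n" x b] by auto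
  note maps = twins_Suc_preserves(2)[OF \<pi>']
  show "?\<rho> x \<in> layer (Suc n) b" "?\<rho> (?\<rho> x) = x" "?\<rho> x \<noteq> x"
    using x maps[OF x] twinsD[OF \<pi>' x'] by auto
  have "butlast x \<in> layer n b" by (rule butlast_layer[OF x])
  then have "butlast x \<in> verts n b" using layer_iff[of n n _ b] by blast
  then have "butlast (\<pi>' x) = butlast x \<or> butlast (\<pi>' x) = restrict \<pi>' (verts n b - {[]}) (butlast x)"
    using twins_parent[OF \<pi>' x'] by auto
  then show "parent_pair (restrict \<pi>' (verts n b - {[]})) (?\<rho> x)
      = parent_pair (restrict \<pi>' (verts n b - {[]})) x"
    using parent_pair_eq_iff[OF twins_restrict[OF \<pi>'] x maps[OF x]] x by simp
qed auto

lemma fpf_parent_pair_butlast: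
  assumes \<pi>: "\<pi> \<in> twins n b" and \<rho>: "\<rho> \<in> fpf_involutions (layer (Suc n) b) (parent_pair \<pi>)"
    and x: "x \<in> layer (Suc n) b"
  shows "butlast (\<rho> x) = butlast x \<or> (butlast x \<noteq> [] \<and> butlast (\<rho> x) = \<pi> (butlast x))"
proof -
  note \<rho>x = fpf_involutionsD[OF \<rho> x]
  have "butlast (\<rho> x) = butlast x \<or> butlast (\<rho> x) = \<pi> (butlast x)"
    using parent_pair_eq_iff[OF \<pi> x \<rho>x(1)] \<rho>x(4) by simp
  moreover have "butlast (\<rho> x) = butlast x" if "butlast x = []"
    using butlast_layer[OF x] butlast_layer[OF \<rho>x(1)] that unfolding layer_def by auto
  ultimately show ?thesis by blast
qed

definition merge_twins :: "nat \<Rightarrow> (nat \<Rightarrow> nat) \<Rightarrow> (nat list \<Rightarrow> nat list) \<times> (nat list \<Rightarrow> nat list)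
    \<Rightarrow> nat list \<Rightarrow> nat list" where
  "merge_twins n b = (\<lambda>(\<pi>, \<rho>) x. if x \<in> verts n b - {[]} then \<pi> x else \<rho> x)"

lemma twins_merge:
  assumes \<pi>: "\<pi> \<in> twins n b" and \<rho>: "\<rho> \<in> fpf_involutions (layer (Suc n) b) (parent_pair \<pi>)"
  shows "merge_twins n b (\<pi>, \<rho>) \<in> twins (Suc n) b"
proof -
  let ?\<pi>' = "merge_twins n b (\<pi>, \<rho>)"
  have old: "?\<pi>' x = \<pi> x" "\<pi> x \<in> verts n b - {[]}" "\<pi> (\<pi> x) = x" "\<pi> x \<noteq> x"
      "length (\<pi> x) = length x" if "x \<in> verts n b - {[]}" for x
    using twinsD[OF \<pi>, of x] that unfolding merge_twins_def by auto
  have new: "?\<pi>' x = \<rho> x" "\<rho> x \<in> layer (Suc n) b" "\<rho> (\<rho> x) = x" "\<rho> x \<noteq> x"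
      "parent_pair \<pi> (\<rho> x) = parent_pair \<pi> x" if "x \<in> layer (Suc n) b" for x
    using fpf_involutionsD[OF \<rho> that] layer_Suc_disjoint[OF that] unfolding merge_twins_def by auto
  have layer_ne: "x \<noteq> []" if "x \<in> layer (Suc n) b" for x using that unfolding layer_def by auto
  have cases: "x \<in> verts n b - {[]} \<or> x \<in> layer (Suc n) b" if "x \<in> verts (Suc n) b - {[]}" for x
    using that verts_Suc by auto
  show ?thesis
    unfolding prefix_tree.twin_involutions_def[OF prefix_tree_verts]
  proof (intro CollectI conjI ballI PiE_I)
    fix x assume x: "x \<in> verts (Suc n) b - {[]}"
    show "?\<pi>' x \<in> verts (Suc n) b - {[]}" "?\<pi>' (?\<pi>' x) = x" "?\<pi>' x \<noteq> x"
      using cases[OF x] old new verts_Suc layer_ne by auto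
    show "length (?\<pi>' x) = length x"
      using cases[OF x] old new unfolding layer_def by auto
    show "butlast (?\<pi>' x) = butlast x \<or> butlast (?\<pi>' x) = ?\<pi>' (butlast x)"
    proof (cases "x \<in> layer (Suc n) b")
      case False
      then have x': "x \<in> verts n b - {[]}" using cases[OF x] by blast
      have "butlast x \<in> verts n b" using x' prefix_tree.butlast_in_V[OF prefix_tree_verts] by blast
      then show ?thesis using twins_parent[OF \<pi>, of x] x' old(1)[OF x'] old(1)[of "butlast x"] by auto
    next
      case True
      have "butlast x \<in> verts n b" using butlast_layer[OF True] layer_iff[of n n _ b] by blast
      then show ?thesis
        using fpf_parent_pair_butlast[OF \<pi> \<rho> True] new(1)[OF True] old(1)[of "butlast x"] by auto
    qed
  next
    fix x assume "x \<notin> verts (Suc n) b - {[]}"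
    then have "x \<notin> verts n b - {[]}" "x \<notin> layer (Suc n) b" using verts_Suc layer_ne by auto
    then show "?\<pi>' x = undefined" by (auto simp: merge_twins_def fpf_involutions_undefined[OF \<rho>])
  qed
qed

lemma bij_betw_twins_Suc:
  "bij_betw (\<lambda>\<pi>'. (restrict \<pi>' (verts n b - {[]}), restrict \<pi>' (layer (Suc n) b)))
     (twins (Suc n) b) (SIGMA \<pi>:twins n b. fpf_involutions (layer (Suc n) b) (parent_pair \<pi>))"
proof (rule bij_betw_byWitness[where f' = "merge_twins n b"])
  show "\<forall>\<pi>' \<in> twins (Suc n) b.
      merge_twins n b (restrict \<pi>' (verts n b - {[]}), restrict \<pi>' (layer (Suc n) b)) = \<pi>'"
  proof (intro ballI ext)
    fix \<pi>' x assume \<pi>': "\<pi>' \<in> twins (Suc n) b"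
    show "merge_twins n b (restrict \<pi>' (verts n b - {[]}), restrict \<pi>' (layer (Suc n) b)) x = \<pi>' x"
      using twins_undefined[OF \<pi>', of x] verts_Suc unfolding merge_twins_def by auto
  qed
  show "\<forall>p \<in> (SIGMA \<pi>:twins n b. fpf_involutions (layer (Suc n) b) (parent_pair \<pi>)).
      (restrict (merge_twins n b p) (verts n b - {[]}), restrict (merge_twins n b p) (layer (Suc n) b)) = p"
  proof (clarify, intro prod.inject[THEN iffD2] conjI ext)
    fix \<pi> \<rho> x
    assume \<pi>: "\<pi> \<in> twins n b" and \<rho>: "\<rho> \<in> fpf_involutions (layer (Suc n) b) (parent_pair \<pi>)"
    show "restrict (merge_twins n b (\<pi>, \<rho>)) (verts n b - {[]}) x = \<pi> x"
      using twins_undefined[OF \<pi>, of x] unfolding merge_twins_def by auto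
    show "restrict (merge_twins n b (\<pi>, \<rho>)) (layer (Suc n) b) x = \<rho> x"
      using fpf_involutions_undefined[OF \<rho>, of x] layer_Suc_disjoint[of x n b]
      unfolding merge_twins_def by auto
  qed
  show "(\<lambda>\<pi>'. (restrict \<pi>' (verts n b - {[]}), restrict \<pi>' (layer (Suc n) b))) ` twins (Suc n) b
      \<subseteq> (SIGMA \<pi>:twins n b. fpf_involutions (layer (Suc n) b) (parent_pair \<pi>))"
    using twins_restrict twins_restrict_layer by blast
  show "merge_twins n b ` (SIGMA \<pi>:twins n b. fpf_involutions (layer (Suc n) b) (parent_pair \<pi>))
      \<subseteq> twins (Suc n) b"
    using twins_merge by blast
qed

lemma card_twins_Suc:
  "card (twins (Suc n) b) = (\<Sum>\<pi> \<in> twins n b. card (fpf_involutions (layer (Suc n) b) (parent_pair \<pi>)))"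
proof -
  have "card (twins (Suc n) b)
      = card (SIGMA \<pi>:twins n b. fpf_involutions (layer (Suc n) b) (parent_pair \<pi>))"
    by (rule bij_betw_same_card[OF bij_betw_twins_Suc])
  also have "\<dots> = (\<Sum>\<pi> \<in> twins n b. card (fpf_involutions (layer (Suc n) b) (parent_pair \<pi>)))"
    by (rule card_SigmaI)
      (auto intro: prefix_tree.finite_twin_involutions[OF prefix_tree_verts] finite_fpf_involutions finite_layer)
  finally show ?thesis .
qed

lemma twins_0: "twins 0 b = {\<lambda>_. undefined}"
proof -
  have "verts 0 b = {[]}" unfolding verts_def by auto
  then show ?thesis unfolding prefix_tree.twin_involutions_def[OF prefix_tree_verts] by simp
qed

lemma card_fpf_involutions_layer_1:
  assumes "even (b 0)"
  shows "card (fpf_involutions (layer 1 b) (parent_pair \<pi>)) = dfact (b 0 - 1)"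
proof -
  have "parent_pair \<pi> x = {[], \<pi> []}" if "x \<in> layer 1 b" for x
    using butlast_layer[of x 0 b] that unfolding parent_pair_def by (simp add: layer_0)
  then have fiber: "{x \<in> layer 1 b. parent_pair \<pi> x = q} = layer 1 b" if "q = {[], \<pi> []}" for q
    using that by auto
  have "card (fpf_involutions (layer 1 b) (parent_pair \<pi>))
      = (\<Prod>q \<in> {{[], \<pi> []}}. dfact (card {x \<in> layer 1 b. parent_pair \<pi> x = q} - 1))"
    by (rule card_fpf_involutions) (use finite_layer assms fiber in \<open>auto simp: card_layer\<close>)
  then show ?thesis using fiber[OF refl] by (simp add: card_layer)
qed

lemma card_twin_pairs:
  assumes \<pi>: "\<pi> \<in> twins n b" and n: "1 \<le> n"
  shows "card ((\<lambda>a. {a, \<pi> a}) ` layer n b) = card (layer n b) div 2"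
proof -
  note \<pi>a = twins_layer[OF \<pi> n]
  have "card {a' \<in> layer n b. {a', \<pi> a'} = {a, \<pi> a}} = 2" if "a \<in> layer n b" for a
  proof -
    have "{a' \<in> layer n b. {a', \<pi> a'} = {a, \<pi> a}} = {a, \<pi> a}"
      using that \<pi>a[OF that] \<pi>a(3) by (auto simp: doubleton_eq_iff)
    then show ?thesis using \<pi>a(2)[OF that] by simp
  qed
  then have "card (layer n b) = 2 * card ((\<lambda>a. {a, \<pi> a}) ` layer n b)"
    by (rule card_eq_mult_card_image[OF finite_layer])
  then show ?thesis by simp
qed

lemma card_children_of_twin_pair:
  assumes \<pi>: "\<pi> \<in> twins n b" and n: "1 \<le> n" and a: "a \<in> layer n b"
  shows "card {x \<in> layer (Suc n) b. parent_pair \<pi> x = {a, \<pi> a}} = 2 * b n"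
proof -
  note \<pi>a = twins_layer[OF \<pi> n]
  have "parent_pair \<pi> x = {a, \<pi> a} \<longleftrightarrow> butlast x = a \<or> butlast x = \<pi> a"
    if "x \<in> layer (Suc n) b" for x
    using \<pi>a(2,3)[OF butlast_layer[OF that]] \<pi>a(3)[OF a]
    unfolding parent_pair_def by (auto simp: doubleton_eq_iff)
  then have "{x \<in> layer (Suc n) b. parent_pair \<pi> x = {a, \<pi> a}}
      = {x \<in> layer (Suc n) b. butlast x = a} \<union> {x \<in> layer (Suc n) b. butlast x = \<pi> a}"
    by auto
  moreover have "card (\<dots>) = b n + b n"
    using children_card[OF a] children_card[OF \<pi>a(1)[OF a]] \<pi>a(2)[OF a] finite_layer
    by (subst card_Un_disjoint) auto
  ultimately show ?thesis by simp
qed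

lemma card_fpf_involutions_layer_Suc:
  assumes \<pi>: "\<pi> \<in> twins n b" and n: "1 \<le> n"
  shows "card (fpf_involutions (layer (Suc n) b) (parent_pair \<pi>))
    = dfact (2 * b n - 1) ^ (card (layer n b) div 2)"
proof -
  let ?pairs = "(\<lambda>a. {a, \<pi> a}) ` layer n b"
  note fiber = card_children_of_twin_pair[OF \<pi> n]
  have "card (fpf_involutions (layer (Suc n) b) (parent_pair \<pi>))
      = (\<Prod>q \<in> ?pairs. dfact (card {x \<in> layer (Suc n) b. parent_pair \<pi> x = q} - 1))"
  proof (rule card_fpf_involutions)
    show "parent_pair \<pi> ` layer (Suc n) b \<subseteq> ?pairs"
      unfolding parent_pair_def using butlast_layer by blast
  qed (use finite_layer fiber in auto)
  also have "\<dots> = (\<Prod>q \<in> ?pairs. dfact (2 * b n - 1))"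
    by (rule prod.cong[OF refl]) (use fiber in auto)
  also have "\<dots> = dfact (2 * b n - 1) ^ (card (layer n b) div 2)"
    using card_twin_pairs[OF \<pi> n] by simp
  finally show ?thesis .
qed

lemma card_twins:
  assumes "even (b 0)" "1 \<le> n"
  shows "card (twins n b)
    = dfact (b 0 - 1) * (\<Prod>k \<in> {1..<n}. dfact (2 * b k - 1) ^ (card (layer k b) div 2))"
  using assms(2)
proof (induction n rule: dec_induct)
  case base
  then show ?case using card_fpf_involutions_layer_1[of b, OF assms(1)] by (simp add: card_twins_Suc twins_0)
next
  case (step n)
  then show ?case
    by (simp add: card_twins_Suc card_fpf_involutions_layer_Suc prod.atLeastLessThan_Suc)
qed

lemma tree_verts_eq: "tree_verts t m d = verts t (branch t m d)"
  unfolding tree_verts_def verts_def ..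

lemma zero_excess_labelings_eq:
  "zero_excess_labelings t m d N r = {l \<in> tree_verts t m d \<rightarrow>\<^sub>E {1..N}.
     l [] = r \<and> zero_excess_labeling (tree_verts t m d) l}"
proof -
  interpret prefix_tree "tree_verts t m d"
    unfolding tree_verts_eq by (rule prefix_tree_verts)
  have "tree_edges t m d = edges" unfolding tree_edges_def edges_def by auto
  then show ?thesis
    unfolding zero_excess_labelings_def labelings_def admissible_def excess_def
      zero_excess_labeling_def zero_excess_labeling_axioms_def
    using prefix_tree_axioms by auto
qed

lemma card_twins_tree:
  assumes "1 \<le> t"
  shows "card (twins t (branch t m d)) = dfact (2 * m - 1) *
           (\<Prod>s = 1..t-1. dfact (2 * d s - 1) ^ (m * (\<Prod>j = s+1..t-1. d j)))"
proof -
  let ?b = "branch t m d"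
  have b0: "?b 0 = 2 * m" and bk: "\<And>k. 1 \<le> k \<Longrightarrow> ?b k = d (t - k)"
    unfolding branch_def by auto
  have pairs: "card (layer k ?b) div 2 = m * (\<Prod>j = t - k + 1..t-1. d j)" if k: "k \<in> {1..<t}" for k
  proof -
    have "{..<k} = insert 0 {1..<k}" using k by auto
    then have "card (layer k ?b) = 2 * m * (\<Prod>j \<in> {1..<k}. d (t - j))"
      unfolding card_layer by (simp add: b0 bk)
    also have "(\<Prod>j \<in> {1..<k}. d (t - j)) = (\<Prod>j = t - k + 1..t-1. d j)"
      by (rule prod.reindex_bij_witness[where i = "\<lambda>s. t - s" and j = "\<lambda>s. t - s"]) (use k in auto)
    finally show ?thesis by simp
  qed
  have "card (twins t ?b)
      = dfact (2 * m - 1) * (\<Prod>k \<in> {1..<t}. dfact (2 * ?b k - 1) ^ (card (layer k ?b) div 2))"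
    using card_twins[of ?b t] assms by (simp add: b0)
  also have "(\<Prod>k \<in> {1..<t}. dfact (2 * ?b k - 1) ^ (card (layer k ?b) div 2))
      = (\<Prod>k \<in> {1..<t}. dfact (2 * d (t - k) - 1) ^ (m * (\<Prod>j = t - k + 1..t-1. d j)))"
    by (rule prod.cong[OF refl]) (simp add: bk pairs)
  also have "\<dots> = (\<Prod>s = 1..t-1. dfact (2 * d s - 1) ^ (m * (\<Prod>j = s+1..t-1. d j)))"
    by (rule prod.reindex_bij_witness[where i = "\<lambda>s. t - s" and j = "\<lambda>s. t - s"])
      (use assms in \<open>auto simp: Suc_diff_Suc\<close>)
  finally show ?thesis .
qed

theorem proposition2p15:
  fixes t m N r :: nat and d :: "nat \<Rightarrow> nat"
  assumes "t \<ge> 1" and "m \<ge> 1"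
    and "\<forall>s \<in> {1..t-1}. d s \<ge> 1"
    and "N \<ge> card (tree_verts t m d)"
    and "r \<in> {1..N}"
  shows "num_classes t m d N r =
           dfact (2 * m - 1) *
           (\<Prod>s = 1..t-1. dfact (2 * d s - 1) ^ (m * (\<Prod>j = s+1..t-1. d j)))"
proof -
  interpret prefix_tree "tree_verts t m d"
    unfolding tree_verts_eq by (rule prefix_tree_verts)
  have "num_classes t m d N r = card twin_involutions"
    unfolding num_classes_def lab_iso_def zero_excess_labelings_eq
    using card_zero_excess_classes assms(4,5) by simp
  also have "\<dots> = card (twins t (branch t m d))" unfolding tree_verts_eq ..
  finally show ?thesis using card_twins_tree[OF assms(1)] by simp
qed

end
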